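(* Let $n_{k'}\le n_k$. The restriction of $Z_{k,k'}$ to $\operatorname{ran}(Z_{k,k'}^*Z_{k,k'})$, and the restriction of $Z_{k,k'}^*$ to $E_{k'}$, are isometric isomorphisms between the subspaces $\operatorname{ran}(Z_{k,k'}^*Z_{k,k'})\subset E_k$ and $E_{k'}$ (in the respective directions).
   Context: Let $\mathcal H$ be a finite-dimensional complex Hilbert space and $E_k,E_{k'}$ mutually orthogonal subspaces with $n_k=\dim E_k$, $n_{k'}=\dim E_{k'}$ and orthonormal bases $\{|a_k\rangle:0\le a\le n_k-1\}$, $\{|b_{k'}\rangle:0\le b\le n_{k'}-1\}$. For vectors $x,y$, $|x\rangle\langle y|$ is the operator $u\mapsto\langle y,u\rangle x$. $\zeta_k=e^{2\pi i/n_k}$. The transition operator is $Z_{k,k'}=n_k^{-1/2}\sum_{b=0}^{n_{k'}-1}\sum_{a=0}^{n_k-1}\zeta_k^{ba}|b_{k'}\rangle\langle a_k|$ (an operator on $\mathcal H$). *)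

theory Defs
  imports "HOL-Analysis.Analysis"
begin

text \<open>The finite-dimensional complex Hilbert space H is modelled as complex^'n with
  the standard inner product (conjugate-linear in the first argument).\<close>

definition cinner :: "complex^'n \<Rightarrow> complex^'n \<Rightarrow> complex" where
  "cinner x y = (\<Sum>i\<in>UNIV. cnj (x $ i) * y $ i)"

definition cnorm :: "complex^'n \<Rightarrow> real" where
  "cnorm x = sqrt (Re (cinner x x))"

definition ketbra :: "complex^'n \<Rightarrow> complex^'n \<Rightarrow> complex^'n^'n" where
  "ketbra x y = (\<chi> i j. x $ i * cnj (y $ j))"

definition cadj :: "complex^'n^'n \<Rightarrow> complex^'n^'n" where
  "cadj A = (\<chi> i j. cnj (A $ j $ i))"

definition cspan_fam :: "(nat \<Rightarrow> complex^'n) \<Rightarrow> nat \<Rightarrow> (complex^'n) set" where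
  "cspan_fam e m = vec.span (e ` {..<m})"

definition orthonormal_fam :: "(nat \<Rightarrow> complex^'n) \<Rightarrow> nat \<Rightarrow> bool" where
  "orthonormal_fam e m \<longleftrightarrow>
     (\<forall>i<m. \<forall>j<m. cinner (e i) (e j) = (if i = j then 1 else 0))"

definition zeta :: "nat \<Rightarrow> complex" where
  "zeta m = exp (2 * of_real pi * \<i> / of_nat m)"

definition transition_op ::
  "(nat \<Rightarrow> complex^'n) \<Rightarrow> nat \<Rightarrow> (nat \<Rightarrow> complex^'n) \<Rightarrow> nat \<Rightarrow> complex^'n^'n" where
  "transition_op a nk b nk' =
     (\<chi> i j. of_real (1 / sqrt (real nk)) *
        (\<Sum>bi<nk'. \<Sum>ai<nk. zeta nk ^ (bi * ai) * ketbra (b bi) (a ai) $ i $ j))"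

definition isometric_iso :: "(complex^'n \<Rightarrow> complex^'n) \<Rightarrow> (complex^'n) set \<Rightarrow> (complex^'n) set \<Rightarrow> bool" where
  "isometric_iso T V W \<longleftrightarrow> bij_betw T V W \<and> (\<forall>x\<in>V. cnorm (T x) = cnorm x)"

end

theory Submission
  imports Defs
begin

text \<open>The coefficient matrix \<open>\<zeta>\<^sub>k\<^sup>b\<^sup>a / \<surd>n\<^sub>k\<close> of \<open>Z\<close> consists of the first \<open>n\<^sub>k\<^sub>'\<close> rows
  of the unitary discrete Fourier matrix of size \<open>n\<^sub>k\<close>, which are orthonormal as
  \<open>n\<^sub>k\<^sub>' \<le> n\<^sub>k\<close>. Hence \<open>Z Z\<^sup>*\<close> is the identity on \<open>E\<^sub>k\<^sub>'\<close>, while \<open>Z\<close> maps everything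
  into \<open>E\<^sub>k\<^sub>'\<close>. For such a coisometry, \<open>Z\<^sup>*\<close> is isometric on \<open>E\<^sub>k\<^sub>'\<close> since
  \<open>\<parallel>Z\<^sup>* y\<parallel>\<^sup>2 = \<langle>y, Z Z\<^sup>* y\<rangle>\<close>, its image \<open>Z\<^sup>* E\<^sub>k\<^sub>'\<close> is \<open>ran (Z\<^sup>* Z)\<close>, and \<open>Z\<close> is
  inverse to \<open>Z\<^sup>*\<close> there.\<close>

lemma cinner_cadj_left: "cinner (cadj A *v x) y = cinner x (A *v y)"
proof -
  have "cinner (cadj A *v x) y = (\<Sum>i\<in>UNIV. \<Sum>j\<in>UNIV. cnj (x $ j) * (A $ j $ i * y $ i))"
    by (simp add: cinner_def cadj_def matrix_vector_mult_def sum_distrib_left sum_distrib_right mult_ac)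
  also have "\<dots> = (\<Sum>j\<in>UNIV. \<Sum>i\<in>UNIV. cnj (x $ j) * (A $ j $ i * y $ i))"
    by (rule sum.swap)
  also have "\<dots> = cinner x (A *v y)"
    by (simp add: cinner_def matrix_vector_mult_def sum_distrib_left)
  finally show ?thesis .
qed

lemma matrix_vector_mult_sum: "A *v sum f S = (\<Sum>s\<in>S. A *v f s)"
  for A :: "complex^'n^'n"
  by (rule vec.linear_sum[OF matrix_vector_mul_linear_gen])

lemma isometric_iso_left_inverse:
  assumes T: "isometric_iso T V W" and left_inv: "\<And>x. x \<in> V \<Longrightarrow> S (T x) = x"
  shows "isometric_iso S W V"
proof -
  have bij: "bij_betw T V W" and isom: "\<And>x. x \<in> V \<Longrightarrow> cnorm (T x) = cnorm x"
    using T by (auto simp: isometric_iso_def)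
  have W: "W = T ` V"
    using bij by (simp add: bij_betw_def)
  have "bij_betw S W V"
    unfolding W using bij left_inv by (intro bij_betw_byWitness[where f' = T]) (auto simp: W)
  moreover have "cnorm (S y) = cnorm y" if "y \<in> W" for y
    using that isom left_inv by (auto simp: W)
  ultimately show ?thesis
    by (simp add: isometric_iso_def)
qed

lemma cnorm_cadj_mult_vec:
  assumes "Z *v (cadj Z *v y) = y"
  shows "cnorm (cadj Z *v y) = cnorm y"
  using cinner_cadj_left[of Z y "cadj Z *v y"] assms by (simp add: cnorm_def)

context
  fixes Z :: "complex^'n^'n" and W :: "(complex^'n) set"
  assumes into: "\<And>x. Z *v x \<in> W"
    and right_inv: "\<And>y. y \<in> W \<Longrightarrow> Z *v (cadj Z *v y) = y"
begin

lemma range_cadj_mult_eq_image: "range (\<lambda>x. (cadj Z ** Z) *v x) = (\<lambda>y. cadj Z *v y) ` W"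
proof
  show "range (\<lambda>x. (cadj Z ** Z) *v x) \<subseteq> (\<lambda>y. cadj Z *v y) ` W"
    using into by (auto simp: matrix_vector_mul_assoc[symmetric])
  show "(\<lambda>y. cadj Z *v y) ` W \<subseteq> range (\<lambda>x. (cadj Z ** Z) *v x)"
  proof
    fix x assume "x \<in> (\<lambda>y. cadj Z *v y) ` W"
    then obtain y where "y \<in> W" and "x = cadj Z *v y"
      by blast
    then have "x = (cadj Z ** Z) *v x"
      using right_inv by (simp add: matrix_vector_mul_assoc[symmetric])
    then show "x \<in> range (\<lambda>x. (cadj Z ** Z) *v x)"
      by (metis rangeI)
  qed
qed

lemma isometric_iso_cadj: "isometric_iso (\<lambda>y. cadj Z *v y) W (range (\<lambda>x. (cadj Z ** Z) *v x))"
  unfolding isometric_iso_def range_cadj_mult_eq_image bij_betw_def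
  using right_inv cnorm_cadj_mult_vec by (metis inj_on_inverseI)

lemma isometric_iso_restrict_range_cadj_mult:
  "isometric_iso (\<lambda>x. Z *v x) (range (\<lambda>x. (cadj Z ** Z) *v x)) W"
  by (rule isometric_iso_left_inverse[OF isometric_iso_cadj right_inv])

end

definition ketbra_sum ::
  "(nat \<Rightarrow> complex^'n) \<Rightarrow> nat \<Rightarrow> (nat \<Rightarrow> complex^'n) \<Rightarrow> nat \<Rightarrow> (nat \<Rightarrow> nat \<Rightarrow> complex)
     \<Rightarrow> complex^'n^'n" where
  "ketbra_sum a m b m' M = (\<chi> i j. \<Sum>q<m'. \<Sum>p<m. M q p * ketbra (b q) (a p) $ i $ j)"

lemma ketbra_sum_mult_vec:
  "ketbra_sum a m b m' M *v x = (\<Sum>q<m'. \<Sum>p<m. (M q p * cinner (a p) x) *s b q)"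
  by (simp add: vec_eq_iff matrix_vector_mult_def ketbra_sum_def ketbra_def cinner_def
      sum_component sum_distrib_left sum_distrib_right mult_ac sum.swap[of _ UNIV])

lemma cadj_ketbra_sum: "cadj (ketbra_sum a m b m' M) = ketbra_sum b m' a m (\<lambda>p q. cnj (M q p))"
  by (simp add: vec_eq_iff cadj_def ketbra_sum_def ketbra_def sum.swap[of _ "{..<m}"] mult_ac)

lemma ketbra_sum_mult_vec_in_span: "ketbra_sum a m b m' M *v x \<in> cspan_fam b m'"
  unfolding ketbra_sum_mult_vec cspan_fam_def
  by (intro vec.span_sum vec.span_scale vec.span_base) auto

lemma ketbra_sum_mult_orthonormal_fam:
  assumes "orthonormal_fam a m" and "p < m"
  shows "ketbra_sum a m b m' M *v a p = (\<Sum>q<m'. M q p *s b q)"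
proof -
  have "(\<Sum>p'<m. (M q p' * cinner (a p') (a p)) *s b q) = M q p *s b q" for q
  proof -
    have "(\<Sum>p'<m. (M q p' * cinner (a p') (a p)) *s b q) = (\<Sum>p'<m. if p' = p then M q p *s b q else 0)"
      using assms by (intro sum.cong) (auto simp: orthonormal_fam_def)
    then show ?thesis
      using assms(2) by simp
  qed
  then show ?thesis
    by (simp add: ketbra_sum_mult_vec)
qed

lemma ketbra_sum_cadj_mult_orthonormal_fam:
  assumes a: "orthonormal_fam a m" and b: "orthonormal_fam b m'" and "r < m'"
  shows "ketbra_sum a m b m' M *v (cadj (ketbra_sum a m b m' M) *v b r)
           = (\<Sum>q<m'. (\<Sum>p<m. M q p * cnj (M r p)) *s b q)"
proof -
  have "ketbra_sum a m b m' M *v (cadj (ketbra_sum a m b m' M) *v b r)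
          = ketbra_sum a m b m' M *v (\<Sum>p<m. cnj (M r p) *s a p)"
    unfolding cadj_ketbra_sum using ketbra_sum_mult_orthonormal_fam[OF b \<open>r < m'\<close>] by simp
  also have "\<dots> = (\<Sum>p<m. \<Sum>q<m'. (cnj (M r p) * M q p) *s b q)"
    using a by (simp add: matrix_vector_mult_sum vector_scalar_commute ketbra_sum_mult_orthonormal_fam
        vec.scale_sum_right)
  also have "\<dots> = (\<Sum>q<m'. (\<Sum>p<m. M q p * cnj (M r p)) *s b q)"
    by (subst sum.swap) (simp add: vec.scale_sum_left mult.commute)
  finally show ?thesis .
qed

lemma ketbra_sum_cadj_right_inverse:
  assumes a: "orthonormal_fam a m" and b: "orthonormal_fam b m'"
    and rows: "\<And>q r. q < m' \<Longrightarrow> r < m' \<Longrightarrow> (\<Sum>p<m. M q p * cnj (M r p)) = (if q = r then 1 else 0)"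
    and y: "y \<in> cspan_fam b m'"
  shows "ketbra_sum a m b m' M *v (cadj (ketbra_sum a m b m' M) *v y) = y"
proof -
  have "y \<in> vec.span (b ` {..<m'})"
    using y by (simp add: cspan_fam_def)
  then show ?thesis
  proof (induct rule: vec.span_induct)
    case base
    show ?case
      unfolding vec.subspace_def by (simp add: matrix_vector_right_distrib vector_scalar_commute)
  next
    case (step x)
    then obtain r where "r < m'" and "x = b r"
      by auto
    moreover have "(\<Sum>q<m'. (\<Sum>p<m. M q p * cnj (M r p)) *s b q) = b r"
      using \<open>r < m'\<close> by (simp add: rows if_distrib[of "\<lambda>c. c *s _"] cong: if_cong)
    ultimately show ?case
      using ketbra_sum_cadj_mult_orthonormal_fam[OF a b] by simp
  qed
qed

lemma zeta_power: "zeta n ^ j = exp (2 * of_real pi * \<i> * of_nat j / of_nat n)"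
  unfolding zeta_def by (simp add: exp_of_nat_mult[symmetric] mult_ac)

lemma zeta_power_eq_iff: "0 < n \<Longrightarrow> zeta n ^ j = zeta n ^ k \<longleftrightarrow> j mod n = k mod n"
  by (simp add: zeta_power complex_root_unity_eq)

lemma cnj_zeta: "cnj (zeta n) = inverse (zeta n)"
  by (simp add: zeta_def exp_cnj exp_minus[symmetric])

lemma sum_powers_root_of_unity:
  fixes w :: "'a::field"
  assumes "w ^ n = 1"
  shows "(\<Sum>k<n. w ^ k) = (if w = 1 then of_nat n else 0)"
  using assms by (simp add: geometric_sum)

lemma sum_zeta_power_mult_cnj:
  assumes "q < n" and "r < n"
  shows "(\<Sum>p<n. zeta n ^ (q * p) * cnj (zeta n ^ (r * p))) = (if q = r then of_nat n else 0)"
proof -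
  define w where "w = zeta n ^ q / zeta n ^ r"
  have n: "0 < n"
    using assms by simp
  have nonzero: "zeta n \<noteq> 0"
    by (simp add: zeta_def)
  have "zeta n ^ (q * p) * cnj (zeta n ^ (r * p)) = w ^ p" for p
    by (simp add: w_def power_mult complex_cnj_power cnj_zeta divide_inverse power_mult_distrib
        power_inverse)
  moreover have "w ^ n = (zeta n ^ n) ^ q / (zeta n ^ n) ^ r"
    unfolding w_def by (simp add: power_divide mult.commute flip: power_mult)
  then have "w ^ n = 1"
    using zeta_power_eq_iff[OF n, of n 0] by simp
  moreover have "w = 1 \<longleftrightarrow> q = r"
    using nonzero assms by (simp add: w_def zeta_power_eq_iff[OF n])
  ultimately show ?thesis
    using sum_powers_root_of_unity[of w n] by simp
qed

lemma fourier_rows_orthonormal: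
  assumes "q < n" and "r < n"
  shows "(\<Sum>p<n. (of_real (1 / sqrt n) * zeta n ^ (q * p)) * cnj (of_real (1 / sqrt n) * zeta n ^ (r * p)))
           = (if q = r then 1 else 0)"
proof -
  have "1 / sqrt n * (1 / sqrt n) * real n = 1"
    using assms by (simp add: divide_simps)
  then have norm: "of_real (1 / sqrt n) * of_real (1 / sqrt n) * of_nat n = (1 :: complex)"
    by (metis of_real_1 of_real_mult of_real_of_nat_eq)
  have "(\<Sum>p<n. (of_real (1 / sqrt n) * zeta n ^ (q * p)) * cnj (of_real (1 / sqrt n) * zeta n ^ (r * p)))
          = of_real (1 / sqrt n) * of_real (1 / sqrt n) * (\<Sum>p<n. zeta n ^ (q * p) * cnj (zeta n ^ (r * p)))"
    by (simp add: sum_distrib_left mult_ac)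
  also have "\<dots> = (if q = r then 1 else 0)"
    unfolding sum_zeta_power_mult_cnj[OF assms] using norm by simp
  finally show ?thesis .
qed

lemma transition_op_eq_ketbra_sum:
  "transition_op a nk b nk' = ketbra_sum a nk b nk' (\<lambda>q p. of_real (1 / sqrt nk) * zeta nk ^ (q * p))"
  by (simp add: transition_op_def ketbra_sum_def sum_distrib_left mult.assoc)

theorem proposition2p6:
  fixes a b :: "nat \<Rightarrow> complex^'n" and nk nk' :: nat
  assumes "orthonormal_fam a nk" and "orthonormal_fam b nk'"
    and "\<forall>x\<in>cspan_fam a nk. \<forall>y\<in>cspan_fam b nk'. cinner x y = 0"
    and "nk' \<le> nk"
  shows "range (\<lambda>x. (cadj (transition_op a nk b nk') ** transition_op a nk b nk') *v x)
           \<subseteq> cspan_fam a nk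
       \<and> isometric_iso (\<lambda>x. transition_op a nk b nk' *v x)
           (range (\<lambda>x. (cadj (transition_op a nk b nk') ** transition_op a nk b nk') *v x))
           (cspan_fam b nk')
       \<and> isometric_iso (\<lambda>x. cadj (transition_op a nk b nk') *v x)
           (cspan_fam b nk')
           (range (\<lambda>x. (cadj (transition_op a nk b nk') ** transition_op a nk b nk') *v x))"
proof -
  define M where "M = (\<lambda>q p. of_real (1 / sqrt nk) * zeta nk ^ (q * p) :: complex)"
  define Z where "Z = transition_op a nk b nk'"
  have Z: "Z = ketbra_sum a nk b nk' M"
    by (simp add: Z_def M_def transition_op_eq_ketbra_sum)
  have into: "Z *v x \<in> cspan_fam b nk'" for x
    unfolding Z by (rule ketbra_sum_mult_vec_in_span)
  have rows: "(\<Sum>p<nk. M q p * cnj (M r p)) = (if q = r then 1 else 0)" if "q < nk'" "r < nk'" for q r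
    unfolding M_def using that assms(4) by (intro fourier_rows_orthonormal) auto
  have right_inv: "Z *v (cadj Z *v y) = y" if "y \<in> cspan_fam b nk'" for y
    unfolding Z by (rule ketbra_sum_cadj_right_inverse[OF assms(1,2) rows that])
  have "range (\<lambda>x. (cadj Z ** Z) *v x) \<subseteq> cspan_fam a nk"
    unfolding Z cadj_ketbra_sum
    by (auto simp flip: matrix_vector_mul_assoc intro: ketbra_sum_mult_vec_in_span)
  with isometric_iso_cadj[OF into right_inv] isometric_iso_restrict_range_cadj_mult[OF into right_inv]
  show ?thesis
    unfolding Z_def by blast
qed

end
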